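(* Let $(G,+)$ be an abelian group with identity $0$. Let $M$ be any matroid over $G$ and let $N$ be a uniform matroid over $G$, both of the same rank $n$, such that $0\notin E(N)$. If $|E(M)|\le |E(N)|<p(G)$, then $M$ is matched to $N$.
   Context: $p(G)$ denotes the smallest cardinality of a nonzero subgroup of $G$. A matroid over $G$ is a matroid $M$ whose finite ground set $E(M)$ is a subset of $G$; all matroids are assumed loopless. A uniform matroid of rank $n$ is one in which the independent sets are exactly the subsets of the ground set of size at most $n$. For matroids $M,N$ over $G$ with $r(M)=r(N)=n>0$ and bases $\mathcal{M}=\{a_1,\dots,a_n\}$ of $M$ and $\mathcal{N}=\{b_1,\dots,b_n\}$ of $N$, $\mathcal{M}$ is matched to $\mathcal{N}$ if there is a permutation $\pi\in S_n$ with $a_i+b_{\pi(i)}\notin E(M)$ for all $i$. $M$ is matched to $N$ if for every basis $\mathcal{M}$ of $M$ there exists a basis $\mathcal{N}$ of $N$ such that $\mathcal{M}$ is matched to $\mathcal{N}$. *)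

theory Defs
  imports Main "HOL-Library.Extended_Nat"
begin

definition matroid :: "'a set \<Rightarrow> ('a set \<Rightarrow> bool) \<Rightarrow> bool" where
  "matroid E indep \<longleftrightarrow>
     finite E \<and>
     indep {} \<and>
     (\<forall>X. indep X \<longrightarrow> X \<subseteq> E) \<and>
     (\<forall>X Y. indep Y \<longrightarrow> X \<subseteq> Y \<longrightarrow> indep X) \<and>
     (\<forall>X Y. indep X \<longrightarrow> indep Y \<longrightarrow> card X < card Y \<longrightarrow>
        (\<exists>y \<in> Y - X. indep (insert y X)))"

definition loopless :: "'a set \<Rightarrow> ('a set \<Rightarrow> bool) \<Rightarrow> bool" where
  "loopless E indep \<longleftrightarrow> (\<forall>x \<in> E. indep {x})"

definition basis :: "('a set \<Rightarrow> bool) \<Rightarrow> 'a set \<Rightarrow> bool" where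
  "basis indep B \<longleftrightarrow> indep B \<and> (\<forall>X. indep X \<longrightarrow> B \<subseteq> X \<longrightarrow> X = B)"

definition matroid_rank :: "'a set \<Rightarrow> ('a set \<Rightarrow> bool) \<Rightarrow> nat" where
  "matroid_rank E indep = Max {card X | X. X \<subseteq> E \<and> indep X}"

definition uniform_matroid :: "'a set \<Rightarrow> ('a set \<Rightarrow> bool) \<Rightarrow> bool" where
  "uniform_matroid E indep \<longleftrightarrow> (\<exists>k. \<forall>X. indep X \<longleftrightarrow> X \<subseteq> E \<and> card X \<le> k)"

definition add_subgroup :: "'a::ab_group_add set \<Rightarrow> bool" where
  "add_subgroup H \<longleftrightarrow> 0 \<in> H \<and> (\<forall>x\<in>H. \<forall>y\<in>H. x + y \<in> H) \<and> (\<forall>x\<in>H. - x \<in> H)"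

definition p_group :: "'a::ab_group_add itself \<Rightarrow> enat" where
  "p_group _ = (INF H \<in> {H :: 'a set. add_subgroup H \<and> H \<noteq> {0}}.
                  (if finite H then enat (card H) else \<infinity>))"

definition basis_matched :: "'a::ab_group_add set \<Rightarrow> 'a set \<Rightarrow> 'a set \<Rightarrow> bool" where
  "basis_matched EM A B \<longleftrightarrow> (\<exists>f. bij_betw f A B \<and> (\<forall>a\<in>A. a + f a \<notin> EM))"

definition matched_to ::
  "'a::ab_group_add set \<Rightarrow> ('a set \<Rightarrow> bool) \<Rightarrow> 'a set \<Rightarrow> ('a set \<Rightarrow> bool) \<Rightarrow> bool" where
  "matched_to EM IM EN IN \<longleftrightarrow>
     (\<forall>A. basis IM A \<longrightarrow> (\<exists>B. basis IN B \<and> basis_matched EM A B))"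

end

theory Submission
  imports Defs "HOL-Library.Set_Algebras"
begin

(* Given a basis A of M, we look for an injection f from A into E(N) with a + f a \<notin> E(M) for all
   a \<in> A; its image has n elements and is therefore a basis of the uniform matroid N. By Hall's
   theorem it suffices that every S \<subseteq> A has at least |S| admissible partners in E(N). Let T be the
   set of b \<in> E(N) admissible for no a \<in> S. Since 0 \<notin> E(N), S + (T \<union> {0}) is a subset of E(M),
   and |E(M)| < p(G); so the Cauchy-Davenport inequality |X + Y| \<ge> min (p(G), |X| + |Y| - 1), valid
   in every abelian group, yields |S| + |T| \<le> |E(M)| \<le> |E(N)|, leaving at least |S| elements of
   E(N) outside T. *)

definition Hall_condition :: "'i set \<Rightarrow> ('i \<Rightarrow> 'b set) \<Rightarrow> bool" where
  "Hall_condition I N \<longleftrightarrow> (\<forall>S\<subseteq>I. card S \<le> card (\<Union>(N ` S)))"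

lemma Hall_condition_Diff_tight:
  assumes fin: "finite I" "\<forall>i\<in>I. finite (N i)" and Hall: "Hall_condition I N"
    and S: "S \<subseteq> I" "card (\<Union>(N ` S)) \<le> card S"
  shows "Hall_condition (I - S) (\<lambda>i. N i - \<Union>(N ` S))"
  unfolding Hall_condition_def
proof (intro allI impI)
  fix T assume T: "T \<subseteq> I - S"
  let ?U = "\<Union>(N ` S)" and ?V = "\<Union>i\<in>T. N i - \<Union>(N ` S)"
  have "T \<union> S \<subseteq> I" using S T by blast
  then have "finite S" "finite T" "\<forall>i\<in>T \<union> S. finite (N i)"
    using fin by (auto intro: finite_subset)
  then have "finite ?U" "finite ?V" by simp_all
  have disj: "?V \<inter> ?U = {}" by blast
  have "T \<inter> S = {}" using T by blast
  then have "card T + card S = card (T \<union> S)"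
    using \<open>finite S\<close> \<open>finite T\<close> by (simp add: card_Un_disjoint)
  also have "\<dots> \<le> card (\<Union>(N ` (T \<union> S)))"
    using Hall \<open>T \<union> S \<subseteq> I\<close> unfolding Hall_condition_def by blast
  also have "\<Union>(N ` (T \<union> S)) = ?V \<union> ?U" by blast
  also have "card (?V \<union> ?U) = card ?V + card ?U"
    by (rule card_Un_disjoint[OF \<open>finite ?V\<close> \<open>finite ?U\<close> disj])
  finally show "card T \<le> card ?V" using S(2) by linarith
qed

lemma Hall_condition_Diff_surplus:
  assumes surplus: "\<forall>S. S \<noteq> {} \<longrightarrow> S \<subset> I \<longrightarrow> card S < card (\<Union>(N ` S))" and "i \<in> I"
  shows "Hall_condition (I - {i}) (\<lambda>j. N j - {x})"
  unfolding Hall_condition_def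
proof (intro allI impI)
  fix T assume T: "T \<subseteq> I - {i}"
  show "card T \<le> card (\<Union>j\<in>T. N j - {x})"
  proof (cases "T = {}")
    case False
    moreover have "T \<subset> I" using T \<open>i \<in> I\<close> by blast
    ultimately have "card T < card (\<Union>(N ` T))" using surplus by blast
    moreover have "card (\<Union>(N ` T)) \<le> card (\<Union>(N ` T) - {x}) + 1"
      using diff_card_le_card_Diff[of "{x}" "\<Union>(N ` T)"] by simp
    moreover have "(\<Union>j\<in>T. N j - {x}) = \<Union>(N ` T) - {x}" by blast
    ultimately show ?thesis by simp
  qed simp
qed

theorem Hall_marriage:
  assumes "finite I" "\<forall>i\<in>I. finite (N i)" "Hall_condition I N"
  shows "\<exists>f. inj_on f I \<and> (\<forall>i\<in>I. f i \<in> N i)"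
  using assms
proof (induction "card I" arbitrary: I N rule: less_induct)
  case less
  note fin = less.prems(1,2) and Hall = less.prems(3)
  (* Halmos-Vaughan: a critical proper subset splits the problem in two; otherwise every
     nonempty proper subset has surplus, so one pair i, x can be matched and removed. *)
  consider (empty) "I = {}"
    | (tight) S where "S \<noteq> {}" "S \<subset> I" "card (\<Union>(N ` S)) \<le> card S"
    | (surplus) "I \<noteq> {}" "\<forall>S. S \<noteq> {} \<longrightarrow> S \<subset> I \<longrightarrow> card S < card (\<Union>(N ` S))"
    using not_le by blast
  then show ?case
  proof cases
    case empty
    then show ?thesis by simp
  next
    case tight
    let ?U = "\<Union>(N ` S)"
    have "card S < card I" using tight fin by (simp add: psubset_card_mono)
    moreover have "finite S" "\<forall>i\<in>S. finite (N i)" using tight fin by (auto intro: finite_subset)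
    moreover have "Hall_condition S N"
      using Hall tight(2) unfolding Hall_condition_def by (blast dest: psubset_imp_subset)
    ultimately have "\<exists>g. inj_on g S \<and> (\<forall>i\<in>S. g i \<in> N i)" by (rule less.hyps)
    then obtain g where g: "inj_on g S" "\<forall>i\<in>S. g i \<in> N i" by blast
    have "I - S \<subset> I" using tight by blast
    then have "card (I - S) < card I" using fin by (simp add: psubset_card_mono)
    moreover have "finite (I - S)" "\<forall>i\<in>I - S. finite (N i - ?U)" using fin by auto
    moreover have "Hall_condition (I - S) (\<lambda>i. N i - ?U)"
      using tight by (intro Hall_condition_Diff_tight[OF fin Hall]) auto
    ultimately have "\<exists>h. inj_on h (I - S) \<and> (\<forall>i\<in>I - S. h i \<in> N i - ?U)" by (rule less.hyps)
    then obtain h where h: "inj_on h (I - S)" "\<forall>i\<in>I - S. h i \<in> N i - ?U" by blast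
    define f where "f i = (if i \<in> S then g i else h i)" for i
    have "inj_on f S" using g(1) by (simp add: f_def inj_on_def)
    moreover have "inj_on f (I - S)" using h(1) by (simp add: f_def inj_on_def)
    moreover have "f ` S \<subseteq> ?U" "f ` (I - S) \<inter> ?U = {}" using g(2) h(2) by (auto simp: f_def)
    ultimately have "inj_on f (S \<union> (I - S))" unfolding inj_on_Un by blast
    moreover have "S \<union> (I - S) = I" using tight by blast
    ultimately have "inj_on f I" by simp
    moreover have "\<forall>i\<in>I. f i \<in> N i" using g(2) h(2) by (simp add: f_def)
    ultimately show ?thesis by blast
  next
    case surplus
    then obtain i where "i \<in> I" by blast
    then have "{i} \<subseteq> I" by simp
    with Hall have "card {i} \<le> card (\<Union>(N ` {i}))" unfolding Hall_condition_def by blast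
    then obtain x where "x \<in> N i" by fastforce
    have "card (I - {i}) < card I" by (rule card_Diff1_less[OF fin(1) \<open>i \<in> I\<close>])
    moreover have "finite (I - {i})" "\<forall>j\<in>I - {i}. finite (N j - {x})" using fin by auto
    moreover have "Hall_condition (I - {i}) (\<lambda>j. N j - {x})"
      by (rule Hall_condition_Diff_surplus[OF surplus(2) \<open>i \<in> I\<close>])
    ultimately have "\<exists>h. inj_on h (I - {i}) \<and> (\<forall>j\<in>I - {i}. h j \<in> N j - {x})" by (rule less.hyps)
    then obtain h where h: "inj_on h (I - {i})" "\<forall>j\<in>I - {i}. h j \<in> N j - {x}" by blast
    define f where "f = h(i := x)"
    have "inj_on f (I - {i})" "f i \<notin> f ` (I - {i})"
      using h by (auto simp: f_def inj_on_def)
    then have "inj_on f (insert i (I - {i}))" unfolding inj_on_insert by blast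
    with \<open>i \<in> I\<close> have "inj_on f I" by (simp add: insert_Diff)
    moreover have "\<forall>j\<in>I. f j \<in> N j" using h(2) \<open>x \<in> N i\<close> by (simp add: f_def)
    ultimately show ?thesis by blast
  qed
qed

lemma p_group_le_card:
  fixes H :: "'a::ab_group_add set"
  assumes "add_subgroup H" "H \<noteq> {0}" "finite H"
  shows "p_group TYPE('a) \<le> enat (card H)"
proof -
  have "p_group TYPE('a) \<le> (if finite H then enat (card H) else \<infinity>)"
    unfolding p_group_def using assms(1,2) by (intro INF_lower) blast
  with assms show ?thesis by simp
qed

lemma set_plus_singleton_iff:
  fixes A :: "'a::ab_group_add set"
  shows "z \<in> A + {a} \<longleftrightarrow> z - a \<in> A"
proof
  assume "z \<in> A + {a}"
  then show "z - a \<in> A" by (auto elim: set_plus_elim)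
next
  assume "z - a \<in> A"
  then have "z - a + a \<in> A + {a}" by (intro set_plus_intro) simp_all
  then show "z \<in> A + {a}" by simp
qed

definition set_stabilizer :: "'a::ab_group_add set \<Rightarrow> 'a set" where
  "set_stabilizer X = {h. X + {h} = X}"

lemma set_plus_singletons: "{a} + {b} = {a + b}"
  by (simp add: set_plus_def)

lemma add_subgroup_set_stabilizer: "add_subgroup (set_stabilizer X)"
  unfolding add_subgroup_def set_stabilizer_def
proof (intro conjI ballI; clarsimp)
  fix h k assume "X + {h} = X" "X + {k} = X"
  have "X + {h + k} = X + {h} + {k}" by (simp only: add.assoc set_plus_singletons)
  also have "\<dots> = X" using \<open>X + {h} = X\<close> \<open>X + {k} = X\<close> by simp
  finally show "X + {h + k} = X" .
next
  fix h assume "X + {h} = X"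
  then have "X + {- h} = X + {h} + {- h}" by simp
  also have "\<dots> = X + {0}" by (simp only: add.assoc set_plus_singletons add.right_inverse)
  finally show "X + {- h} = X" by simp
qed

lemma set_stabilizer_subset:
  assumes "a \<in> X"
  shows "set_stabilizer X \<subseteq> X + {- a}"
proof
  fix h assume "h \<in> set_stabilizer X"
  then have "X + {h} = X" by (simp add: set_stabilizer_def)
  moreover have "a + h \<in> X + {h}" using \<open>a \<in> X\<close> by (simp add: set_plus_singleton_iff)
  ultimately have "a + h \<in> X" by simp
  then show "h \<in> X + {- a}" by (simp add: set_plus_singleton_iff add.commute)
qed

lemma p_group_le_card_if_periodic:
  fixes X :: "'a::ab_group_add set"
  assumes "finite X" "a \<in> X" "d \<noteq> 0" "X + {d} \<subseteq> X"
  shows "p_group TYPE('a) \<le> enat (card X)"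
proof -
  have "finite (X + {d})" using \<open>finite X\<close> by (simp add: finite_set_plus)
  then have "X + {d} = X" using assms(1,4) by (simp add: card_plus_sing card_subset_eq)
  with \<open>d \<noteq> 0\<close> have "set_stabilizer X \<noteq> {0}" unfolding set_stabilizer_def by blast
  have "finite (X + {- a})" using \<open>finite X\<close> by (simp add: finite_set_plus)
  with set_stabilizer_subset[OF \<open>a \<in> X\<close>] have "finite (set_stabilizer X)"
    by (rule finite_subset)
  with \<open>set_stabilizer X \<noteq> {0}\<close>
  have "p_group TYPE('a) \<le> enat (card (set_stabilizer X))"
    by (intro p_group_le_card add_subgroup_set_stabilizer)
  also have "card (set_stabilizer X) \<le> card (X + {- a})"
    by (rule card_mono[OF \<open>finite (X + {- a})\<close> set_stabilizer_subset[OF \<open>a \<in> X\<close>]])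
  then have "enat (card (set_stabilizer X)) \<le> enat (card X)" by (simp add: card_plus_sing)
  finally show ?thesis .
qed

lemma card_le_card_set_plus:
  fixes X Y :: "'a::ab_group_add set"
  assumes "finite X" "finite Y" "b \<in> Y"
  shows "card X \<le> card (X + Y)"
proof -
  have "X + {b} \<subseteq> X + Y" using \<open>b \<in> Y\<close> by (intro set_plus_mono2) simp_all
  moreover have "finite (X + Y)" using assms(1,2) by (rule finite_set_plus)
  ultimately have "card (X + {b}) \<le> card (X + Y)" by (simp add: card_mono)
  then show ?thesis by (simp add: card_plus_sing)
qed

lemma card_Dyson_transform:
  fixes X Y :: "'a::ab_group_add set"
  assumes "finite X" "finite Y"
  shows "card (X \<union> (Y + {e})) + card (Y \<inter> (X + {- e})) = card X + card Y"
proof -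
  have "X \<inter> (Y + {e}) = (Y \<inter> (X + {- e})) + {e}"
    by (auto simp: set_plus_singleton_iff)
  then have "card (X \<inter> (Y + {e})) = card (Y \<inter> (X + {- e}))" by (simp add: card_plus_sing)
  moreover have "card X + card (Y + {e}) = card (X \<union> (Y + {e})) + card (X \<inter> (Y + {e}))"
    using assms by (intro card_Un_Int) (simp_all add: finite_set_plus)
  ultimately show ?thesis by (simp add: card_plus_sing)
qed

lemma Dyson_transform_set_plus_subset:
  fixes X Y :: "'a::ab_group_add set"
  shows "(X \<union> (Y + {e})) + (Y \<inter> (X + {- e})) \<subseteq> X + Y"
proof
  fix z assume "z \<in> (X \<union> (Y + {e})) + (Y \<inter> (X + {- e}))"
  then obtain x y where z: "z = x + y" "x \<in> X \<union> (Y + {e})" "y \<in> Y \<inter> (X + {- e})"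
    by (rule set_plus_elim)
  then have "y \<in> Y" "y + e \<in> X" by (simp_all add: set_plus_singleton_iff)
  show "z \<in> X + Y"
  proof (cases "x \<in> X")
    case True
    with z(1) \<open>y \<in> Y\<close> show ?thesis by (simp add: set_plus_intro)
  next
    case False
    with z(2) have "x - e \<in> Y" by (simp add: set_plus_singleton_iff)
    with \<open>y + e \<in> X\<close> have "(y + e) + (x - e) \<in> X + Y" by (rule set_plus_intro)
    moreover have "z = (y + e) + (x - e)" using z(1) by (simp add: algebra_simps)
    ultimately show ?thesis by simp
  qed
qed

theorem Cauchy_Davenport:
  fixes X Y :: "'a::ab_group_add set"
  assumes "finite X" "X \<noteq> {}" "finite Y" "Y \<noteq> {}"
  shows "min (p_group TYPE('a)) (enat (card X + card Y - 1)) \<le> enat (card (X + Y))"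
  using assms
proof (induction "card Y" arbitrary: X Y rule: less_induct)
  case less
  then obtain b where "b \<in> Y" by blast
  with less.prems have card_X_le: "card X \<le> card (X + Y)" by (simp add: card_le_card_set_plus)
  (* Either Dyson's e-transform with e = a - b shrinks Y, or X is invariant under the
     difference of two elements of Y. *)
  consider (singleton) "card Y = 1"
    | (transform) a b where "a \<in> X" "b \<in> Y" "\<not> Y + {a - b} \<subseteq> X"
    | (periodic) "card Y \<noteq> 1" "\<forall>a\<in>X. \<forall>b\<in>Y. Y + {a - b} \<subseteq> X"
    by blast
  then show ?case
  proof cases
    case singleton
    with card_X_le show ?thesis by (simp add: min_le_iff_disj)
  next
    case transform
    define e where "e = a - b"
    define X' where "X' = X \<union> (Y + {e})"
    define Y' where "Y' = Y \<inter> (X + {- e})"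
    have "b \<in> Y'" using transform(1,2) by (simp add: Y'_def e_def set_plus_singleton_iff)
    from transform(3) obtain z where "z \<in> Y + {e}" "z \<notin> X" unfolding e_def by blast
    then have "z - e \<in> Y" "z - e \<notin> Y'" by (simp_all add: Y'_def set_plus_singleton_iff)
    then have "Y' \<subset> Y" by (auto simp: Y'_def)
    then have "card Y' < card Y" using less.prems(3) by (rule psubset_card_mono[rotated])
    moreover have "finite X'" "X' \<noteq> {}" "finite Y'" "Y' \<noteq> {}"
      using less.prems \<open>b \<in> Y'\<close> by (auto simp: X'_def Y'_def finite_set_plus)
    ultimately have "min (p_group TYPE('a)) (enat (card X' + card Y' - 1)) \<le> enat (card (X' + Y'))"
      by (rule less.hyps)
    also have "card X' + card Y' = card X + card Y"
      unfolding X'_def Y'_def using less.prems(1,3) by (rule card_Dyson_transform)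
    also have "enat (card (X' + Y')) \<le> enat (card (X + Y))"
      unfolding X'_def Y'_def enat_ord_simps using less.prems
      by (intro card_mono Dyson_transform_set_plus_subset) (simp_all add: finite_set_plus)
    finally show ?thesis by simp
  next
    case periodic
    with \<open>b \<in> Y\<close> less.prems obtain b' where "b' \<in> Y" "b' \<noteq> b"
      by (metis is_singletonI' is_singleton_altdef)
    have "X + {b - b'} \<subseteq> X"
    proof
      fix z assume "z \<in> X + {b - b'}"
      then have "z - (b - b') \<in> X" by (simp add: set_plus_singleton_iff)
      with periodic(2) \<open>b' \<in> Y\<close> have "Y + {z - (b - b') - b'} \<subseteq> X" by blast
      moreover have "z \<in> Y + {z - (b - b') - b'}" using \<open>b \<in> Y\<close> by (simp add: set_plus_singleton_iff)
      ultimately show "z \<in> X" by blast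
    qed
    moreover obtain x where "x \<in> X" using less.prems(2) by blast
    moreover have "b - b' \<noteq> 0" using \<open>b' \<noteq> b\<close> by simp
    ultimately have "p_group TYPE('a) \<le> enat (card X)"
      using less.prems(1) by (intro p_group_le_card_if_periodic)
    also have "\<dots> \<le> enat (card (X + Y))" using card_X_le by simp
    finally show ?thesis by (simp add: min.coboundedI1)
  qed
qed

lemma matroid_finite_ground: "matroid E I \<Longrightarrow> finite E"
  by (simp add: matroid_def)

lemma matroid_indep_subset: "matroid E I \<Longrightarrow> I X \<Longrightarrow> X \<subseteq> E"
  by (simp add: matroid_def)

lemma finite_indep_cards:
  assumes "matroid E I"
  shows "finite {card X | X. X \<subseteq> E \<and> I X}"
proof -
  have "finite E" using assms by (rule matroid_finite_ground)
  then have "{card X | X. X \<subseteq> E \<and> I X} \<subseteq> {..card E}" by (auto intro: card_mono)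
  then show ?thesis by (rule finite_subset) simp
qed

lemma matroid_card_le_rank:
  assumes "matroid E I" "I X"
  shows "card X \<le> matroid_rank E I"
proof -
  have "X \<subseteq> E" using assms by (rule matroid_indep_subset)
  with \<open>I X\<close> have "card X \<in> {card X | X. X \<subseteq> E \<and> I X}" by blast
  with finite_indep_cards[OF assms(1)] show ?thesis unfolding matroid_rank_def by (rule Max_ge)
qed

lemma matroid_rank_attained:
  assumes "matroid E I"
  obtains X where "I X" "card X = matroid_rank E I"
proof -
  have "I {}" using assms unfolding matroid_def by blast
  then have "{card X | X. X \<subseteq> E \<and> I X} \<noteq> {}" by blast
  with finite_indep_cards[OF assms] have "matroid_rank E I \<in> {card X | X. X \<subseteq> E \<and> I X}"
    unfolding matroid_rank_def by (rule Max_in)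
  then obtain X where "I X" "matroid_rank E I = card X" by blast
  with that show ?thesis by simp
qed

lemma matroid_augment:
  assumes "matroid E I" "I X" "I Y" "card X < card Y"
  obtains y where "y \<in> Y - X" "I (insert y X)"
proof -
  have "\<forall>X Y. I X \<longrightarrow> I Y \<longrightarrow> card X < card Y \<longrightarrow> (\<exists>y\<in>Y - X. I (insert y X))"
    using assms(1) by (simp add: matroid_def)
  with assms(2-4) that show ?thesis by blast
qed

lemma matroid_basis_card:
  assumes "matroid E I" "basis I B"
  shows "card B = matroid_rank E I"
proof (rule ccontr)
  assume "card B \<noteq> matroid_rank E I"
  have "I B" using assms(2) unfolding basis_def by blast
  then have "card B \<le> matroid_rank E I" by (rule matroid_card_le_rank[OF assms(1)])
  obtain X where "I X" "card X = matroid_rank E I"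
    using matroid_rank_attained[OF assms(1)] .
  with \<open>card B \<noteq> matroid_rank E I\<close> \<open>card B \<le> matroid_rank E I\<close> have "card B < card X" by simp
  with assms(1) \<open>I B\<close> \<open>I X\<close> obtain y where "y \<in> X - B" "I (insert y B)"
    by (rule matroid_augment)
  with assms(2) show False unfolding basis_def by blast
qed

lemma uniform_matroid_basisI:
  assumes "matroid E I" "uniform_matroid E I" "B \<subseteq> E" "card B = matroid_rank E I"
  shows "basis I B"
proof -
  obtain k where k: "\<And>X. I X \<longleftrightarrow> X \<subseteq> E \<and> card X \<le> k"
    using assms(2) unfolding uniform_matroid_def by blast
  obtain X where "I X" "card X = matroid_rank E I"
    using matroid_rank_attained[OF assms(1)] .
  with k assms(3,4) have "I B" by simp
  moreover have "X = B" if "I X" "B \<subseteq> X" for X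
  proof -
    have "finite X"
      using matroid_indep_subset[OF assms(1) that(1)] matroid_finite_ground[OF assms(1)]
      by (rule finite_subset)
    moreover have "card X \<le> card B" using matroid_card_le_rank[OF assms(1) that(1)] assms(4) by simp
    ultimately show "X = B" using card_seteq[OF _ that(2)] by simp
  qed
  ultimately show ?thesis unfolding basis_def by blast
qed

lemma Hall_condition_sum_avoiding:
  fixes EM EN :: "'a::ab_group_add set"
  assumes "finite EM" "finite EN" "0 \<notin> EN" "A \<subseteq> EM"
    and "card EM \<le> card EN" "enat (card EN) < p_group TYPE('a)"
  shows "Hall_condition A (\<lambda>a. {b \<in> EN. a + b \<notin> EM})"
  unfolding Hall_condition_def
proof (intro allI impI)
  fix S assume "S \<subseteq> A"
  let ?U = "\<Union>a\<in>S. {b \<in> EN. a + b \<notin> EM}"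
  define T where "T = {b \<in> EN. \<forall>a\<in>S. a + b \<in> EM}"
  show "card S \<le> card ?U"
  proof (cases "S = {}")
    case False
    have "S \<subseteq> EM" using \<open>S \<subseteq> A\<close> assms(4) by (rule order_trans)
    then have "finite S" using assms(1) by (rule finite_subset)
    have "finite T" "0 \<notin> T" using assms(2,3) by (simp_all add: T_def)
    have "S + insert 0 T \<subseteq> EM"
    proof
      fix z assume "z \<in> S + insert 0 T"
      then obtain a b where "z = a + b" "a \<in> S" "b \<in> insert 0 T" by (rule set_plus_elim)
      with \<open>S \<subseteq> EM\<close> show "z \<in> EM" by (auto simp: T_def)
    qed
    then have "card (S + insert 0 T) \<le> card EM" using assms(1) by (simp add: card_mono)
    then have "card (S + insert 0 T) \<le> card EN" using assms(5) by (rule order_trans)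
    then have "enat (card (S + insert 0 T)) \<le> enat (card EN)" by simp
    then have "enat (card (S + insert 0 T)) < p_group TYPE('a)" using assms(6) by (rule le_less_trans)
    then have "\<not> p_group TYPE('a) \<le> enat (card (S + insert 0 T))" by (simp add: not_le)
    moreover have "min (p_group TYPE('a)) (enat (card S + card (insert 0 T) - 1))
        \<le> enat (card (S + insert 0 T))"
      using \<open>finite S\<close> \<open>S \<noteq> {}\<close> \<open>finite T\<close> by (intro Cauchy_Davenport) simp_all
    ultimately have "card S + card T \<le> card (S + insert 0 T)"
      using \<open>finite T\<close> \<open>0 \<notin> T\<close> by (simp add: min_le_iff_disj)
    also have "\<dots> \<le> card EN" by fact
    also have "\<dots> \<le> card (?U \<union> T)"
      using assms(2) \<open>finite S\<close> \<open>finite T\<close> by (intro card_mono) (auto simp: T_def)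
    also have "\<dots> \<le> card ?U + card T" by (rule card_Un_le)
    finally show ?thesis by simp
  qed simp
qed

lemma sum_avoiding_injection:
  fixes EM EN :: "'a::ab_group_add set"
  assumes "finite EM" "finite EN" "0 \<notin> EN" "A \<subseteq> EM"
    and "card EM \<le> card EN" "enat (card EN) < p_group TYPE('a)"
  obtains f where "inj_on f A" "\<forall>a\<in>A. f a \<in> EN \<and> a + f a \<notin> EM"
proof -
  have "finite A" using assms(1,4) by (simp add: finite_subset)
  moreover have "\<forall>a\<in>A. finite {b \<in> EN. a + b \<notin> EM}" using assms(2) by simp
  moreover have "Hall_condition A (\<lambda>a. {b \<in> EN. a + b \<notin> EM})"
    using assms by (rule Hall_condition_sum_avoiding)
  ultimately have "\<exists>f. inj_on f A \<and> (\<forall>a\<in>A. f a \<in> {b \<in> EN. a + b \<notin> EM})"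
    by (rule Hall_marriage)
  with that show ?thesis by auto
qed

theorem proposition2p8:
  fixes EM EN :: "'a::ab_group_add set"
    and IM IN :: "'a set \<Rightarrow> bool"
    and n :: nat
  assumes "matroid EM IM" and "loopless EM IM"
    and "matroid EN IN" and "loopless EN IN"
    and "uniform_matroid EN IN"
    and "matroid_rank EM IM = n" and "matroid_rank EN IN = n" and "n > 0"
    and "0 \<notin> EN"
    and "card EM \<le> card EN"
    and "enat (card EN) < p_group TYPE('a)"
  shows "matched_to EM IM EN IN"
  unfolding matched_to_def
proof (intro allI impI)
  fix A assume "basis IM A"
  then have "IM A" by (simp add: basis_def)
  then have "A \<subseteq> EM" by (rule matroid_indep_subset[OF assms(1)])
  obtain f where f: "inj_on f A" "\<forall>a\<in>A. f a \<in> EN \<and> a + f a \<notin> EM"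
    using matroid_finite_ground[OF assms(1)] matroid_finite_ground[OF assms(3)] assms(9)
      \<open>A \<subseteq> EM\<close> assms(10,11)
    by (rule sum_avoiding_injection)
  have "f ` A \<subseteq> EN" using f(2) by blast
  moreover have "card (f ` A) = matroid_rank EN IN"
    using card_image[OF f(1)] matroid_basis_card[OF assms(1) \<open>basis IM A\<close>] assms(6,7) by simp
  ultimately have "basis IN (f ` A)" by (rule uniform_matroid_basisI[OF assms(3,5)])
  moreover have "basis_matched EM A (f ` A)"
    unfolding basis_matched_def using f by (blast intro: inj_on_imp_bij_betw)
  ultimately show "\<exists>B. basis IN B \<and> basis_matched EM A B" by blast
qed

end
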